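(* Let $\phi\in\,]0,\pi[$, $M\in\mathbb{R}$, $N>0$, let $\Sigma$ be the Keplerian branch around ${\rm O}$ in the plane ${\rm O}xy$ with equation $r=My+N$, and let $g$ be the affine map $(x_1,y_1)\mapsto(x_3,y_3)$ defined by $x_1=x_3-M\frac{\cos\phi}{\sin\phi}y_3-N\cos\phi$, $y_1=\frac{1}{\sin\phi}y_3$. Let $\Gamma$ be a Keplerian arc carried by $\Sigma$ whose endpoints ${\rm A}$ and ${\rm B}$ have the same ordinate $y_{\rm A}=y_{\rm B}$. Then the elapsed time $\Delta t=t_{\rm B}-t_{\rm A}$ of the image arc $g(\Gamma)$ equals that of $\Gamma$.
   Context: In the Euclidean plane ${\rm O}xy$, $r=\sqrt{x^2+y^2}$, Newton's system $\ddot q=-q/r^3$, energy $H=\frac12\|\dot q\|^2-\frac1r$. A Keplerian arc is the class, modulo time shifts, of a solution (extended through collisions by bouncing back along the same ray with the same energy) restricted to $[t_{\rm A},t_{\rm B}]$, $t_{\rm B}>t_{\rm A}$, with ends ${\rm A}=q(t_{\rm A})$, ${\rm B}=q(t_{\rm B})$ and elapsed time $\Delta t=t_{\rm B}-t_{\rm A}$. The image $g(\Sigma)$ is the Keplerian branch $r=x\cos\phi+yM\sin\phi+N\sin^2\phi$. The image arc $g(\Gamma)$ is the Keplerian arc on $g(\Sigma)$ obtained by mapping $\Gamma$ as an unparametrized oriented curve (including its number of turns around ${\rm O}$), traversed in the direction induced by $g$ from $g({\rm A})$ to $g({\rm B})$, with time parametrization given by Newton's system. *)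

theory Defs
  imports "HOL-Analysis.Analysis"
begin

text \<open>The Euclidean plane Oxy is encoded as the complex numbers: x = Re, y = Im,
  r = norm (= sqrt (x^2+y^2)).  Newton's system reads q'' = - q / r^3.\<close>

definition kepler_motion :: "(real \<Rightarrow> complex) \<Rightarrow> real \<Rightarrow> real \<Rightarrow> bool" where
  "kepler_motion q a b \<longleftrightarrow> a < b \<and>
     (\<exists>v. \<forall>t\<in>{a..b}. q t \<noteq> 0 \<and>
        (q has_vector_derivative v t) (at t within {a..b}) \<and>
        (v has_vector_derivative (- (q t / of_real ((norm (q t)) ^ 3)))) (at t within {a..b}))"

definition on_branch :: "real \<Rightarrow> real \<Rightarrow> complex \<Rightarrow> bool" where
  "on_branch M N p \<longleftrightarrow> norm p = M * Im p + N"

text \<open>The affine map g : (x1,y1) \<mapsto> (x3,y3) defined by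
  x1 = x3 - M (cos phi / sin phi) y3 - N cos phi,  y1 = y3 / sin phi,
  i.e. (solved for (x3,y3)) y3 = sin phi * y1, x3 = x1 + M cos phi y1 + N cos phi.\<close>
definition kepler_g :: "real \<Rightarrow> real \<Rightarrow> real \<Rightarrow> complex \<Rightarrow> complex" where
  "kepler_g phi M N p =
     Complex (Re p + M * cos phi * Im p + N * cos phi) (sin phi * Im p)"

text \<open>q3 on [sA,sB] traverses the image under g of the arc q1 on [tA,tB], as an
  oriented unparametrized curve: q3 = g o q1 o sigma with sigma an increasing
  homeomorphism of [sA,sB] onto [tA,tB].\<close>
definition is_image_arc ::
  "(complex \<Rightarrow> complex) \<Rightarrow> (real \<Rightarrow> complex) \<Rightarrow> real \<Rightarrow> real \<Rightarrow>
   (real \<Rightarrow> complex) \<Rightarrow> real \<Rightarrow> real \<Rightarrow> bool" where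
  "is_image_arc g q1 tA tB q3 sA sB \<longleftrightarrow>
     (\<exists>\<sigma>. continuous_on {sA..sB} \<sigma> \<and> strict_mono_on {sA..sB} \<sigma> \<and>
          \<sigma> ` {sA..sB} = {tA..tB} \<and>
          (\<forall>s\<in>{sA..sB}. q3 s = g (q1 (\<sigma> s))))"

end

theory Submission
  imports Defs
begin

(* Along a Keplerian motion the angular momentum C = x y' - y x' is constant, and on a conic
   r = alpha x + beta y + p one has C^2 = p.  The branch r = M y + N has parameter N, and g maps
   it onto the branch r = x cos phi + y M sin phi + N (sin phi)^2, of parameter N (sin phi)^2.
   Writing the image motion as g o q1 o sigma, its angular momentum is
   sin phi * sigma' * (C + N cos phi y'), and comparing squares gives
   sigma' * (1 + x cos phi / r) = 1.  Since x cos phi / r = (N cos phi / C) y' on the branch,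
   ds/dt = d/dt (t + (N cos phi / C) y); integrating, the two elapsed times differ by
   (N cos phi / C) (y_B - y_A), which vanishes when y_A = y_B. *)

lemma DERIV_unique_Icc:
  fixes f g :: "real \<Rightarrow> real"
  assumes "a < b" "x \<in> {a..b}"
    and "(f has_real_derivative D) (at x within {a..b})"
    and "(g has_real_derivative E) (at x within {a..b})"
    and "\<forall>s\<in>{a..b}. f s = g s"
  shows "D = E"
proof -
  have "(f has_real_derivative E) (at x within {a..b})"
    by (rule has_field_derivative_transform_within[OF assms(4), of 1]) (use assms in auto)
  then show ?thesis
    using vector_derivative_unique_within_closed_interval[of a b x f D E] assms
    by (simp add: has_real_derivative_iff_has_vector_derivative)
qed

lemma at_within_Icc_nontrivial:
  fixes a b x :: real
  assumes "a < b" "x \<in> {a..b}"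
  shows "at x within {a..b} \<noteq> bot"
  using assms by (auto simp: trivial_limit_within intro!: islimpt_closure_open[where s="{a<..<b}"])

lemma mono_on_has_real_derivative_nonneg:
  fixes f :: "real \<Rightarrow> real"
  assumes "mono_on S f" "x \<in> S" "at x within S \<noteq> bot"
    and "(f has_real_derivative D) (at x within S)"
  shows "0 \<le> D"
proof (rule tendsto_lowerbound)
  show "((\<lambda>y. (f y - f x) / (y - x)) \<longlongrightarrow> D) (at x within S)"
    using assms(4) by (simp add: has_field_derivative_iff)
  show "\<forall>\<^sub>F y in at x within S. 0 \<le> (f y - f x) / (y - x)"
    unfolding eventually_at_filter
  proof (rule always_eventually, intro allI impI)
    fix y assume "y \<noteq> x" "y \<in> S"
    then show "0 \<le> (f y - f x) / (y - x)"
      using assms(1,2) mono_onD[OF assms(1)]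
      by (cases "y < x") (auto simp: zero_le_divide_iff)
  qed
qed (use assms(3) in simp)

text \<open>The difference quotients of \<open>\<sigma>\<close> are those of \<open>G\<close> divided by those of \<open>F\<close>
  along \<open>\<sigma>\<close>; injectivity of \<open>\<sigma>\<close> keeps the latter defined.\<close>
lemma DERIV_through_composition:
  fixes \<sigma> F G :: "real \<Rightarrow> real"
  assumes \<sigma>: "continuous (at s within S) \<sigma>" "inj_on \<sigma> S" "\<sigma> ` S \<subseteq> T" "s \<in> S"
    and F: "(F has_real_derivative DF) (at (\<sigma> s) within T)" "DF \<noteq> 0"
    and G: "(G has_real_derivative DG) (at s within S)"
    and GF: "\<forall>u\<in>S. G u = F (\<sigma> u)"
  shows "(\<sigma> has_real_derivative DG / DF) (at s within S)"
proof -
  have \<sigma>_ne: "\<sigma> u \<noteq> \<sigma> s" if "u \<in> S" "u \<noteq> s" for u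
    using \<sigma>(2,4) that by (auto dest: inj_onD)
  have "filterlim \<sigma> (at (\<sigma> s) within T) (at s within S)"
  proof (rule filterlim_at_withinI)
    show "filterlim \<sigma> (nhds (\<sigma> s)) (at s within S)"
      using \<sigma>(1) by (simp add: continuous_within)
    show "\<forall>\<^sub>F u in at s within S. \<sigma> u \<in> T - {\<sigma> s}"
      unfolding eventually_at_filter by (rule always_eventually) (use \<sigma>_ne \<sigma>(3) in auto)
  qed
  with F(1) have F_quot: "((\<lambda>u. (F (\<sigma> u) - F (\<sigma> s)) / (\<sigma> u - \<sigma> s)) \<longlongrightarrow> DF) (at s within S)"
    by (auto simp: has_field_derivative_iff intro: filterlim_compose)
  have G_quot: "((\<lambda>u. (G u - G s) / (u - s)) \<longlongrightarrow> DG) (at s within S)"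
    using G by (simp add: has_field_derivative_iff)
  have "\<forall>\<^sub>F u in at s within S. (F (\<sigma> u) - F (\<sigma> s)) / (\<sigma> u - \<sigma> s) \<noteq> 0"
    using tendsto_imp_eventually_ne[OF F_quot F(2)] .
  moreover have "\<forall>\<^sub>F u in at s within S. u \<in> S \<and> u \<noteq> s"
    unfolding eventually_at_filter by (rule always_eventually) auto
  ultimately have "\<forall>\<^sub>F u in at s within S.
      ((G u - G s) / (u - s)) / ((F (\<sigma> u) - F (\<sigma> s)) / (\<sigma> u - \<sigma> s)) = (\<sigma> u - \<sigma> s) / (u - s)"
  proof eventually_elim
    case (elim u)
    then have "\<sigma> u - \<sigma> s \<noteq> 0" "F (\<sigma> u) - F (\<sigma> s) \<noteq> 0"
      and G_diff: "G u - G s = F (\<sigma> u) - F (\<sigma> s)"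
      using \<sigma>_ne GF \<sigma>(4) by auto
    then show ?case unfolding G_diff by (simp add: divide_simps)
  qed
  with tendsto_divide[OF G_quot F_quot F(2)] show ?thesis
    unfolding has_field_derivative_iff by (rule tendsto_cong[THEN iffD1, rotated])
qed

text \<open>Testing \<open>q = L \<circ> p \<circ> \<sigma> + c\<close> against the functional \<open>inner (L V)\<close> yields a scalar
  equation to which \<open>DERIV_through_composition\<close> applies.\<close>
lemma reparametrized_image_velocity:
  fixes \<sigma> :: "real \<Rightarrow> real" and p :: "real \<Rightarrow> 'a::real_normed_vector"
    and q :: "real \<Rightarrow> 'b::real_inner"
  assumes L: "bounded_linear L" "L V \<noteq> 0"
    and s: "a < b" "s \<in> {a..b}"
    and \<sigma>: "continuous_on {a..b} \<sigma>" "inj_on \<sigma> {a..b}" "\<sigma> ` {a..b} \<subseteq> T"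
    and p: "(p has_vector_derivative V) (at (\<sigma> s) within T)"
    and q: "(q has_vector_derivative w) (at s within {a..b})"
    and q_eq: "\<forall>u\<in>{a..b}. q u = L (p (\<sigma> u)) + c"
  obtains d where "(\<sigma> has_real_derivative d) (at s within {a..b})" "w = L (d *\<^sub>R V)"
proof -
  have LV: "bounded_linear (\<lambda>x. inner (L V) (L x))"
    using bounded_linear_compose[OF bounded_linear_inner_right L(1)] .
  have F: "((\<lambda>t. inner (L V) (L (p t))) has_real_derivative inner (L V) (L V)) (at (\<sigma> s) within T)"
    using bounded_linear.has_vector_derivative[OF LV p]
    by (simp add: has_real_derivative_iff_has_vector_derivative)
  have G: "((\<lambda>u. inner (L V) (q u - c)) has_real_derivative inner (L V) w) (at s within {a..b})"
    using bounded_linear.has_vector_derivative[OF bounded_linear_inner_right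
        has_vector_derivative_diff_const[THEN iffD2, OF q]]
    by (simp add: has_real_derivative_iff_has_vector_derivative)
  define d where "d = inner (L V) w / inner (L V) (L V)"
  have \<sigma>': "(\<sigma> has_real_derivative d) (at s within {a..b})"
    unfolding d_def
  proof (rule DERIV_through_composition[OF _ \<sigma>(2,3) s(2) F _ G])
    show "continuous (at s within {a..b}) \<sigma>"
      using \<sigma>(1) s(2) continuous_on_eq_continuous_within by blast
  qed (use L(2) q_eq in auto)
  have "((p \<circ> \<sigma>) has_vector_derivative d *\<^sub>R V) (at s within {a..b})"
    by (rule vector_diff_chain_within)
      (use \<sigma>' has_vector_derivative_within_subset[OF p \<sigma>(3)] in
        \<open>simp_all add: has_real_derivative_iff_has_vector_derivative\<close>)
  then have "((\<lambda>u. L (p (\<sigma> u)) + c) has_vector_derivative L (d *\<^sub>R V)) (at s within {a..b})"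
    unfolding has_vector_derivative_add_const
    using bounded_linear.has_vector_derivative[OF L(1)] by (simp add: o_def)
  then have "(q has_vector_derivative L (d *\<^sub>R V)) (at s within {a..b})"
    by (rule has_vector_derivative_transform_within[of _ _ _ _ 1]) (use s q_eq in auto)
  with q s have "w = L (d *\<^sub>R V)"
    using vector_derivative_unique_within[OF at_within_Icc_nontrivial] by blast
  with \<sigma>' show thesis using that by blast
qed

lemma mono_on_Icc_onto_endpoints:
  fixes f :: "real \<Rightarrow> real"
  assumes "mono_on {a..b} f" "f ` {a..b} = {c..d}" "a \<le> b"
  shows "f a = c" "f b = d"
proof -
  have "c \<le> d" using assms(2,3) by (metis atLeastAtMost_iff image_eqI order_trans order_refl)
  then obtain u v where "u \<in> {a..b}" "f u = c" "v \<in> {a..b}" "f v = d"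
    using assms(2) by (metis atLeastAtMost_iff imageE order_refl)
  moreover have "f a \<in> {c..d}" "f b \<in> {c..d}" using assms(2,3) by auto
  ultimately show "f a = c" "f b = d"
    using mono_onD[OF assms(1)] assms(3) by (metis atLeastAtMost_iff antisym order_refl)+
qed

definition newton_solution :: "(real \<Rightarrow> complex) \<Rightarrow> (real \<Rightarrow> complex) \<Rightarrow> real set \<Rightarrow> bool" where
  "newton_solution q v S \<longleftrightarrow> (\<forall>t\<in>S. q t \<noteq> 0 \<and> (q has_vector_derivative v t) (at t within S) \<and>
     (v has_vector_derivative - (q t / of_real (norm (q t) ^ 3))) (at t within S))"

lemma kepler_motion_iff: "kepler_motion q a b \<longleftrightarrow> a < b \<and> (\<exists>v. newton_solution q v {a..b})"
  by (simp add: kepler_motion_def newton_solution_def)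

definition wedge :: "complex \<Rightarrow> complex \<Rightarrow> real" where
  "wedge z w = Re z * Im w - Im z * Re w"

lemma newton_solutionD:
  assumes "newton_solution q v S" "t \<in> S"
  shows "q t \<noteq> 0" "(q has_vector_derivative v t) (at t within S)"
    "(v has_vector_derivative - (q t / of_real (norm (q t) ^ 3))) (at t within S)"
  using assms by (auto simp: newton_solution_def)

lemma newton_solution_has_real_derivatives:
  assumes "newton_solution q v S" "t \<in> S"
  shows "((\<lambda>t. Re (q t)) has_real_derivative Re (v t)) (at t within S)"
    and "((\<lambda>t. Im (q t)) has_real_derivative Im (v t)) (at t within S)"
    and "((\<lambda>t. Re (v t)) has_real_derivative - Re (q t) / norm (q t) ^ 3) (at t within S)"
    and "((\<lambda>t. Im (v t)) has_real_derivative - Im (q t) / norm (q t) ^ 3) (at t within S)"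
    and "((\<lambda>t. norm (q t)) has_real_derivative
           (Re (q t) * Re (v t) + Im (q t) * Im (v t)) / norm (q t)) (at t within S)"
proof -
  note q = newton_solutionD(1,2)[OF assms] and v = newton_solutionD(3)[OF assms]
  show "((\<lambda>t. Re (q t)) has_real_derivative Re (v t)) (at t within S)"
    and "((\<lambda>t. Im (q t)) has_real_derivative Im (v t)) (at t within S)"
    using q by (auto intro: derivative_intros)
  show "((\<lambda>t. Re (v t)) has_real_derivative - Re (q t) / norm (q t) ^ 3) (at t within S)"
    and "((\<lambda>t. Im (v t)) has_real_derivative - Im (q t) / norm (q t) ^ 3) (at t within S)"
    using has_field_derivative_Re[OF v] has_field_derivative_Im[OF v]
    by (simp_all add: Re_divide_of_real Im_divide_of_real)
  have "0 < (Re (q t))\<^sup>2 + (Im (q t))\<^sup>2"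
    using q(1) by (simp add: sum_power2_gt_zero_iff complex_eq_iff)
  then have "((\<lambda>t. sqrt ((Re (q t))\<^sup>2 + (Im (q t))\<^sup>2)) has_real_derivative
      inverse (sqrt ((Re (q t))\<^sup>2 + (Im (q t))\<^sup>2)) / 2 *
        (2 * Re (q t) * Re (v t) + 2 * Im (q t) * Im (v t))) (at t within S)"
    by (rule DERIV_chain2[OF DERIV_real_sqrt])
      (use q(2) in \<open>auto intro!: derivative_eq_intros\<close>)
  then show "((\<lambda>t. norm (q t)) has_real_derivative
      (Re (q t) * Re (v t) + Im (q t) * Im (v t)) / norm (q t)) (at t within S)"
    unfolding norm_complex_def by (rule DERIV_cong) (simp add: divide_simps algebra_simps)
qed

lemma newton_solution_wedge_constant:
  assumes "newton_solution q v S" "convex S" "t \<in> S" "u \<in> S"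
  shows "wedge (q t) (v t) = wedge (q u) (v u)"
proof -
  have "((\<lambda>t. wedge (q t) (v t)) has_real_derivative 0) (at s within S)" if "s \<in> S" for s
  proof -
    note d = newton_solution_has_real_derivatives[OF assms(1) that] newton_solutionD[OF assms(1) that]
    have "((\<lambda>t. wedge (q t) (v t)) has_real_derivative
        Re (v s) * Im (v s) + Re (q s) * (- Im (q s) / norm (q s) ^ 3)
        - (Im (v s) * Re (v s) + Im (q s) * (- Re (q s) / norm (q s) ^ 3))) (at s within S)"
      unfolding wedge_def using d by (auto intro!: derivative_eq_intros)
    then show ?thesis by (rule DERIV_cong) (simp add: algebra_simps)
  qed
  then obtain c where "\<forall>x\<in>S. wedge (q x) (v x) = c"
    using has_field_derivative_zero_constant[OF assms(2)] by blast
  with assms(3,4) show ?thesis by simp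
qed

lemma newton_solution_on_conic_radial:
  assumes "a < b" "newton_solution q v {a..b}"
    and conic: "\<forall>t\<in>{a..b}. norm (q t) = \<alpha> * Re (q t) + \<beta> * Im (q t) + p"
    and t: "t \<in> {a..b}"
  shows "Re (q t) * Re (v t) + Im (q t) * Im (v t) = norm (q t) * (\<alpha> * Re (v t) + \<beta> * Im (v t))"
proof -
  note d = newton_solution_has_real_derivatives[OF assms(2) t] newton_solutionD[OF assms(2) t]
  have "((\<lambda>t. norm (q t) - \<alpha> * Re (q t) - \<beta> * Im (q t) - p) has_real_derivative
      (Re (q t) * Re (v t) + Im (q t) * Im (v t)) / norm (q t) - \<alpha> * Re (v t) - \<beta> * Im (v t))
      (at t within {a..b})"
    using d by (auto intro!: derivative_eq_intros)
  from DERIV_unique_Icc[OF assms(1) t this DERIV_const[of 0]] conic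
  have "(Re (q t) * Re (v t) + Im (q t) * Im (v t)) / norm (q t) = \<alpha> * Re (v t) + \<beta> * Im (v t)"
    by simp
  with newton_solutionD(1)[OF assms(2) t] show ?thesis by (simp add: field_simps)
qed

text \<open>Differentiating the radial identity once more gives \<open>|v|\<^sup>2 - E\<^sup>2 = p / r\<^sup>2\<close>,
  where \<open>E = \<alpha> v\<^sub>x + \<beta> v\<^sub>y\<close>; Lagrange's identity \<open>r\<^sup>2 |v|\<^sup>2 = (q \<bullet> v)\<^sup>2 + wedge\<^sup>2\<close>
  then turns this into the claim.\<close>
lemma newton_solution_on_conic_wedge_sq:
  assumes ab: "a < b" and sol: "newton_solution q v {a..b}"
    and conic: "\<forall>t\<in>{a..b}. norm (q t) = \<alpha> * Re (q t) + \<beta> * Im (q t) + p"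
    and t: "t \<in> {a..b}"
  shows "(wedge (q t) (v t))\<^sup>2 = p"
proof -
  note radial = newton_solution_on_conic_radial[OF ab sol conic]
  define X where "X = Re (q t)"
  define Y where "Y = Im (q t)"
  define U where "U = Re (v t)"
  define W where "W = Im (v t)"
  define R where "R = norm (q t)"
  define E where "E = \<alpha> * U + \<beta> * W"
  have R: "R > 0" "R\<^sup>2 = X\<^sup>2 + Y\<^sup>2"
    using sol t by (auto simp: newton_solution_def R_def X_def Y_def cmod_power2)
  have XU: "X * U + Y * W = R * E" and XY: "\<alpha> * X + \<beta> * Y = R - p"
    using radial[OF t] conic t by (auto simp: X_def Y_def U_def W_def R_def E_def)
  note d = newton_solution_has_real_derivatives[OF sol t] newton_solutionD[OF sol t]
  have "((\<lambda>s. Re (q s) * Re (v s) + Im (q s) * Im (v s)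
        - norm (q s) * (\<alpha> * Re (v s) + \<beta> * Im (v s))) has_real_derivative
      U * U + X * (- X / R ^ 3) + (W * W + Y * (- Y / R ^ 3))
      - ((X * U + Y * W) / R * E + R * (\<alpha> * (- X / R ^ 3) + \<beta> * (- Y / R ^ 3))))
      (at t within {a..b})"
    using d unfolding X_def Y_def U_def W_def R_def E_def
    by (auto intro!: derivative_eq_intros simp: mult.commute)
  from DERIV_unique_Icc[OF ab t this DERIV_const[of 0]] radial
  have "U * U + X * (- X / R ^ 3) + (W * W + Y * (- Y / R ^ 3))
      - ((X * U + Y * W) / R * E + R * (\<alpha> * (- X / R ^ 3) + \<beta> * (- Y / R ^ 3))) = 0"
    by simp
  moreover have "X * (- X / R ^ 3) + Y * (- Y / R ^ 3) = - R\<^sup>2 / R ^ 3"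
    unfolding R(2) by (simp add: diff_divide_distrib power2_eq_square)
  moreover have "- R\<^sup>2 / R ^ 3 = - 1 / R"
    using R(1) by (simp add: power2_eq_square power3_eq_cube)
  moreover have "(X * U + Y * W) / R * E = E\<^sup>2"
    using R(1) by (simp add: XU power2_eq_square)
  moreover have "R * (\<alpha> * (- X / R ^ 3) + \<beta> * (- Y / R ^ 3)) = - (R - p) / R\<^sup>2"
    unfolding XY[symmetric] using R(1) by (simp add: field_simps power2_eq_square power3_eq_cube)
  ultimately have "U * U + W * W - E\<^sup>2 = 1 / R - (R - p) / R\<^sup>2"
    by linarith
  also have "\<dots> = p / R\<^sup>2"
    using R(1) by (simp add: field_simps power2_eq_square)
  finally have "R\<^sup>2 * (U\<^sup>2 + W\<^sup>2) - R\<^sup>2 * E\<^sup>2 = p"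
    using R(1) by (simp add: field_simps power2_eq_square)
  moreover have "R\<^sup>2 * (U\<^sup>2 + W\<^sup>2) = (X * U + Y * W)\<^sup>2 + (X * W - Y * U)\<^sup>2"
    unfolding R(2) by (simp add: algebra_simps power2_eq_square)
  ultimately have "(X * W - Y * U)\<^sup>2 = p"
    using XU by (simp add: power_mult_distrib)
  then show ?thesis
    by (simp add: wedge_def X_def Y_def U_def W_def)
qed

lemma kepler_g_affine: "kepler_g phi M N z = kepler_g phi M 0 z + of_real (N * cos phi)"
  by (simp add: kepler_g_def complex_eq_iff)

lemma bounded_linear_kepler_g: "bounded_linear (kepler_g phi M 0)"
proof -
  have "linear (kepler_g phi M 0)"
    by (rule linearI) (simp_all add: kepler_g_def complex_eq_iff algebra_simps)
  then show ?thesis by (simp add: linear_conv_bounded_linear)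
qed

lemma kepler_g_eq_0_iff:
  assumes "sin phi \<noteq> 0"
  shows "kepler_g phi M 0 z = 0 \<longleftrightarrow> z = 0"
  using assms by (auto simp: kepler_g_def complex_eq_iff)

lemma wedge_kepler_g:
  "wedge (kepler_g phi M N z) (kepler_g phi M 0 w) = sin phi * (wedge z w + N * cos phi * Im w)"
  by (simp add: kepler_g_def wedge_def algebra_simps)

text \<open>Writing \<open>x, y, r\<close> for the coordinates of \<open>z\<close> and \<open>c = cos phi\<close>, both sides equal
  \<open>c x + r\<close>: the image point is \<open>(x + c r, y sin phi)\<close>, whose squared norm is
  \<open>(c x + r)\<^sup>2 + (sin phi)\<^sup>2 (x\<^sup>2 + y\<^sup>2 - r\<^sup>2)\<close>.\<close>
lemma kepler_g_branch_to_conic: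
  assumes "norm z = M * Im z + N"
  shows "norm (kepler_g phi M N z) =
    cos phi * Re (kepler_g phi M N z) + M * sin phi * Im (kepler_g phi M N z) + N * (sin phi)\<^sup>2"
proof -
  define x y r c s where "x = Re z" and "y = Im z" and "r = norm z"
    and "c = cos phi" and "s = sin phi"
  have r: "r = M * y + N" "r\<^sup>2 = x\<^sup>2 + y\<^sup>2" "\<bar>x\<bar> \<le> r"
    unfolding r_def x_def y_def using assms abs_Re_le_cmod[of z] cmod_power2[of z] by simp_all
  have cs: "s\<^sup>2 + c\<^sup>2 = 1" "\<bar>c\<bar> \<le> 1"
    by (simp_all add: s_def c_def)
  have g: "kepler_g phi M N z = Complex (x + c * r) (s * y)"
    by (simp add: kepler_g_def x_def y_def c_def s_def r(1) algebra_simps)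
  have "\<bar>c * x\<bar> \<le> \<bar>x\<bar>"
    using cs(2) by (simp add: abs_mult mult_left_le_one_le)
  with r(3) have nonneg: "0 \<le> c * x + r" by linarith
  have "(x + c * r)\<^sup>2 + (s * y)\<^sup>2 - ((c * x + r)\<^sup>2 + s\<^sup>2 * (x\<^sup>2 + y\<^sup>2 - r\<^sup>2))
      = (1 - (s\<^sup>2 + c\<^sup>2)) * (x\<^sup>2 - r\<^sup>2)"
    by (simp add: algebra_simps power2_eq_square)
  then have "(x + c * r)\<^sup>2 + (s * y)\<^sup>2 = (c * x + r)\<^sup>2 + s\<^sup>2 * (x\<^sup>2 + y\<^sup>2 - r\<^sup>2)"
    using cs(1) by simp
  then have "norm (kepler_g phi M N z) = c * x + r"
    using nonneg by (simp add: g norm_complex_def r(2) real_sqrt_unique)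
  also have "\<dots> = c * (x + c * r) + M * s * (s * y) + N * s\<^sup>2"
  proof -
    have "c * (x + c * r) + M * s * (s * y) + N * s\<^sup>2 = c * x + (s\<^sup>2 + c\<^sup>2) * r"
      unfolding r(1) by (simp add: algebra_simps power2_eq_square)
    then show ?thesis using cs(1) by simp
  qed
  finally show ?thesis
    by (simp add: g c_def s_def)
qed

locale kepler_image_arc =
  fixes phi M N :: real
    and q1 v1 :: "real \<Rightarrow> complex" and tA tB :: real
    and q3 v3 :: "real \<Rightarrow> complex" and sA sB :: real
    and \<sigma> :: "real \<Rightarrow> real"
  assumes phi: "0 < phi" "phi < pi" and N: "0 < N"
    and q1: "tA < tB" "newton_solution q1 v1 {tA..tB}"
    and branch: "\<forall>t\<in>{tA..tB}. on_branch M N (q1 t)"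
    and q3: "sA < sB" "newton_solution q3 v3 {sA..sB}"
    and \<sigma>: "continuous_on {sA..sB} \<sigma>" "strict_mono_on {sA..sB} \<sigma>" "\<sigma> ` {sA..sB} = {tA..tB}"
    and q3_eq: "\<forall>s\<in>{sA..sB}. q3 s = kepler_g phi M N (q1 (\<sigma> s))"
begin

definition C :: real where "C = wedge (q1 tA) (v1 tA)"

lemma \<sigma>_endpoints: "\<sigma> sA = tA" "\<sigma> sB = tB"
  using mono_on_Icc_onto_endpoints[OF strict_mono_on_imp_mono_on[OF \<sigma>(2)] \<sigma>(3)] q3(1) by auto

lemma \<sigma>_mem: "s \<in> {sA..sB} \<Longrightarrow> \<sigma> s \<in> {tA..tB}"
  using \<sigma>(3) by blast

lemma q1_conic: "\<forall>t\<in>{tA..tB}. norm (q1 t) = 0 * Re (q1 t) + M * Im (q1 t) + N"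
  using branch by (simp add: on_branch_def)

lemma wedge_q1: "t \<in> {tA..tB} \<Longrightarrow> wedge (q1 t) (v1 t) = C"
  unfolding C_def by (rule newton_solution_wedge_constant[OF q1(2)]) (use q1(1) in auto)

lemma C_sq: "C\<^sup>2 = N"
  using newton_solution_on_conic_wedge_sq[OF q1 q1_conic, of tA] q1(1) by (simp add: C_def)

lemma C_nonzero: "C \<noteq> 0"
  using C_sq N by auto

lemma q1_radial:
  assumes t: "t \<in> {tA..tB}"
  shows "N * Im (v1 t) * norm (q1 t) = Re (q1 t) * C"
proof -
  define X Y U W r where "X = Re (q1 t)" and "Y = Im (q1 t)" and "U = Re (v1 t)"
    and "W = Im (v1 t)" and "r = norm (q1 t)"
  have radial: "X * U + Y * W = r * (M * W)" and r: "r = M * Y + N" "X\<^sup>2 + Y\<^sup>2 = r\<^sup>2"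
    using newton_solution_on_conic_radial[OF q1 q1_conic t] q1_conic t cmod_power2[of "q1 t"]
    by (simp_all add: X_def Y_def U_def W_def r_def)
  have "X * (X * W - Y * U) = (X\<^sup>2 + Y\<^sup>2) * W - Y * (X * U + Y * W)"
    by (simp add: algebra_simps power2_eq_square)
  also have "\<dots> = W * r * (r - M * Y)"
    unfolding radial r(2) by (simp add: algebra_simps power2_eq_square)
  also have "\<dots> = W * r * N"
    using r(1) by simp
  finally have "X * (X * W - Y * U) = W * r * N" .
  then show ?thesis
    using wedge_q1[OF t] by (simp add: wedge_def X_def Y_def U_def W_def r_def mult_ac)
qed

lemma wedge_q3_sq:
  assumes "s \<in> {sA..sB}"
  shows "(wedge (q3 s) (v3 s))\<^sup>2 = N * (sin phi)\<^sup>2"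
proof (rule newton_solution_on_conic_wedge_sq[OF q3 _ assms])
  show "\<forall>s\<in>{sA..sB}. norm (q3 s) = cos phi * Re (q3 s) + M * sin phi * Im (q3 s) + N * (sin phi)\<^sup>2"
    using kepler_g_branch_to_conic q1_conic q3_eq \<sigma>_mem by simp
qed

text \<open>Comparing the constant angular momenta of \<open>q1\<close> and \<open>q3\<close> determines the speed of the
  reparametrization up to sign, and the sign is fixed because \<open>\<sigma>\<close> is increasing and
  \<open>\<bar>x cos phi\<bar> \<le> r\<close>.\<close>
lemma reparametrization_rate:
  assumes s: "s \<in> {sA..sB}"
  obtains d where "(\<sigma> has_real_derivative d) (at s within {sA..sB})"
    "d * (1 + cos phi * Re (q1 (\<sigma> s)) / norm (q1 (\<sigma> s))) = 1"
proof -
  define P V r c sn where "P = q1 (\<sigma> s)" and "V = v1 (\<sigma> s)" and "r = norm P"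
    and "c = cos phi" and "sn = sin phi"
  have \<tau>: "\<sigma> s \<in> {tA..tB}" using \<sigma>_mem[OF s] .
  have sn: "sn > 0" using phi by (simp add: sn_def sin_gt_zero)
  have r: "r > 0" using newton_solutionD(1)[OF q1(2) \<tau>] by (simp add: r_def P_def)
  have "V \<noteq> 0" using wedge_q1[OF \<tau>] C_nonzero by (auto simp: wedge_def V_def)
  then have LV: "kepler_g phi M 0 V \<noteq> 0" using sn kepler_g_eq_0_iff by (simp add: sn_def)
  have q3_affine: "\<forall>u\<in>{sA..sB}. q3 u = kepler_g phi M 0 (q1 (\<sigma> u)) + of_real (N * cos phi)"
    using q3_eq kepler_g_affine[of phi M N] by simp
  have q1': "(q1 has_vector_derivative V) (at (\<sigma> s) within {tA..tB})"
    using newton_solutionD(2)[OF q1(2) \<tau>] by (simp add: V_def)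
  obtain d where d: "(\<sigma> has_real_derivative d) (at s within {sA..sB})"
    and v3: "v3 s = kepler_g phi M 0 (d *\<^sub>R V)"
    using reparametrized_image_velocity[OF bounded_linear_kepler_g LV q3(1) s \<sigma>(1)
        strict_mono_on_imp_inj_on[OF \<sigma>(2)] equalityD1[OF \<sigma>(3)] q1'
        newton_solutionD(2)[OF q3(2) s] q3_affine] .
  have "d \<ge> 0"
    by (rule mono_on_has_real_derivative_nonneg[OF strict_mono_on_imp_mono_on[OF \<sigma>(2)] s
          at_within_Icc_nontrivial[OF q3(1) s] d])
  define Q where "Q = d * (1 + c * Re P / r)"
  have NcV: "N * c * Im V = c * Re P * C / r"
    using q1_radial[OF \<tau>] r by (simp add: field_simps P_def V_def r_def)
  have "wedge (q3 s) (v3 s) = sn * (wedge P (d *\<^sub>R V) + N * c * Im (d *\<^sub>R V))"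
    using q3_eq s by (simp add: v3 wedge_kepler_g sn_def c_def P_def)
  also have "\<dots> = sn * d * (C + N * c * Im V)"
    using wedge_q1[OF \<tau>] by (simp add: wedge_def P_def V_def algebra_simps)
  also have "\<dots> = sn * C * Q"
    unfolding NcV Q_def using r by (simp add: field_simps)
  finally have "sn\<^sup>2 * N * Q\<^sup>2 = sn\<^sup>2 * N"
    using wedge_q3_sq[OF s] C_sq by (simp add: sn_def power_mult_distrib mult_ac)
  then have "Q\<^sup>2 = 1" using sn N by simp
  moreover have "Q \<ge> 0"
  proof -
    have "\<bar>c * Re P\<bar> \<le> \<bar>Re P\<bar>" by (simp add: c_def abs_mult mult_left_le_one_le)
    also have "\<dots> \<le> r" unfolding r_def by (rule abs_Re_le_cmod)
    finally have "0 \<le> 1 + c * Re P / r" using r by (simp add: field_simps abs_le_iff)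
    then show ?thesis using \<open>d \<ge> 0\<close> by (simp add: Q_def)
  qed
  ultimately have "Q = 1" by (simp add: power2_eq_1_iff)
  with d show thesis using that by (simp add: Q_def c_def P_def r_def)
qed

lemma time_shift_has_derivative_zero:
  assumes s: "s \<in> {sA..sB}"
  shows "((\<lambda>u. \<sigma> u + N * cos phi / C * Im (q1 (\<sigma> u)) - u) has_real_derivative 0)
    (at s within {sA..sB})"
proof -
  obtain d where d: "(\<sigma> has_real_derivative d) (at s within {sA..sB})"
    and rate: "d * (1 + cos phi * Re (q1 (\<sigma> s)) / norm (q1 (\<sigma> s))) = 1"
    using reparametrization_rate[OF s] .
  have \<tau>: "\<sigma> s \<in> {tA..tB}" using \<sigma>_mem[OF s] .
  have "((q1 \<circ> \<sigma>) has_vector_derivative d *\<^sub>R v1 (\<sigma> s)) (at s within {sA..sB})"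
    by (rule vector_diff_chain_within)
      (use d has_vector_derivative_within_subset[OF newton_solutionD(2)[OF q1(2) \<tau>]] \<sigma>(3) in
        \<open>auto simp: has_real_derivative_iff_has_vector_derivative\<close>)
  then have "((\<lambda>u. Im (q1 (\<sigma> u))) has_real_derivative d * Im (v1 (\<sigma> s))) (at s within {sA..sB})"
    using has_field_derivative_Im by (fastforce simp: o_def)
  from DERIV_diff[OF DERIV_add[OF d DERIV_cmult[where c="N * cos phi / C", OF this]] DERIV_ident]
  have "((\<lambda>u. \<sigma> u + N * cos phi / C * Im (q1 (\<sigma> u)) - u) has_real_derivative
      d * (1 + N * cos phi * Im (v1 (\<sigma> s)) / C) - 1) (at s within {sA..sB})"
    by (rule DERIV_cong) (simp add: algebra_simps)
  moreover have "N * cos phi * Im (v1 (\<sigma> s)) / C = cos phi * Re (q1 (\<sigma> s)) / norm (q1 (\<sigma> s))"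
    using q1_radial[OF \<tau>] C_nonzero newton_solutionD(1)[OF q1(2) \<tau>] by (simp add: field_simps)
  ultimately show ?thesis using rate by simp
qed

lemma elapsed_time: "sB - sA = tB - tA + N * cos phi / C * (Im (q1 tB) - Im (q1 tA))"
proof -
  obtain c where "\<forall>u\<in>{sA..sB}. \<sigma> u + N * cos phi / C * Im (q1 (\<sigma> u)) - u = c"
    using has_field_derivative_zero_constant[OF convex_real_interval(5)
        time_shift_has_derivative_zero] by blast
  then have "\<sigma> sB + N * cos phi / C * Im (q1 (\<sigma> sB)) - sB
      = \<sigma> sA + N * cos phi / C * Im (q1 (\<sigma> sA)) - sA"
    using q3(1) by simp
  then show ?thesis
    unfolding \<sigma>_endpoints right_diff_distrib by linarith
qed

end

theorem lemma10:
  fixes phi M N tA tB sA sB :: real and q1 q3 :: "real \<Rightarrow> complex"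
  assumes "0 < phi" "phi < pi" "0 < N"
    and "kepler_motion q1 tA tB"
    and "\<forall>t\<in>{tA..tB}. on_branch M N (q1 t)"
    and "Im (q1 tA) = Im (q1 tB)"
    and "kepler_motion q3 sA sB"
    and "is_image_arc (kepler_g phi M N) q1 tA tB q3 sA sB"
  shows "sB - sA = tB - tA"
proof -
  obtain v1 v3 \<sigma> where "kepler_image_arc phi M N q1 v1 tA tB q3 v3 sA sB \<sigma>"
    using assms(1-5,7,8) unfolding kepler_motion_iff is_image_arc_def kepler_image_arc_def
    by blast
  then interpret kepler_image_arc phi M N q1 v1 tA tB q3 v3 sA sB \<sigma> .
  show ?thesis using elapsed_time assms(6) by simp
qed

end
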